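(* Let $n\geq 3$ and let $a_1(t),\dots,a_n(t)\in\mathbb{C}[t]$ be nonzero polynomials. For $b(t)\in\mathbb{C}[t]$, the equation $$\sum_{i=1}^n a_i(t)\,x_i(t)^2=b(t)$$ has a solution with all $x_i(t)\in\mathbb{C}[t]$ if and only if, for every integer $m\geq 1$, it has a solution modulo $\left(\prod_{i=1}^n a_i(t)\right)^m$ (i.e. a solution in $\mathbb{C}[t]/\left(\prod_{i=1}^n a_i(t)\right)^m$). *)

theory Defs
  imports "HOL-Computational_Algebra.Polynomial" Complex_Main
begin

definition has_poly_solution :: "nat \<Rightarrow> (nat \<Rightarrow> complex poly) \<Rightarrow> complex poly \<Rightarrow> bool" where
  "has_poly_solution n a b \<longleftrightarrow>
     (\<exists>x :: nat \<Rightarrow> complex poly. (\<Sum>i=1..n. a i * (x i)^2) = b)"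

definition has_solution_mod :: "nat \<Rightarrow> (nat \<Rightarrow> complex poly) \<Rightarrow> complex poly \<Rightarrow> complex poly \<Rightarrow> bool" where
  "has_solution_mod n a b q \<longleftrightarrow>
     (\<exists>x :: nat \<Rightarrow> complex poly. q dvd ((\<Sum>i=1..n. a i * (x i)^2) - b))"

end

theory Submission
  imports Defs "HOL-Computational_Algebra.Computational_Algebra"
    "HOL-Computational_Algebra.Field_as_Ring"
begin

text \<open>
  By Tsen's theorem, realised here as a Legendre-type descent on degrees, every ternary form
  \<open>a\<^sub>1x\<^sub>1\<^sup>2 + a\<^sub>2x\<^sub>2\<^sup>2 + a\<^sub>3x\<^sub>3\<^sup>2\<close> with nonzero coefficients is isotropic over \<open>\<complex>[t]\<close>.  This yields a primitive
  isotropic vector \<open>v\<close>, an isotropic partner \<open>u\<close> with \<open>B(u,v) \<noteq> 0\<close>, and a vector \<open>z\<close> orthogonal to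
  both.  If \<open>B(x,v)\<close> divides \<open>B(x,x) - b\<close>, say \<open>B(x,x) - b = K B(x,v)\<close>, then \<open>x - (K/2) v\<close>
  represents \<open>b\<close>.  To reach this situation, start from a solution modulo a high power of
  \<open>P = \<Prod> a\<^sub>i\<close>; Eichler transformations (which preserve \<open>B(x,x)\<close>) make \<open>B(x,v)\<close> not divisible
  by \<open>(t - \<alpha>)\<^sup>N\<close> at each root \<open>\<alpha>\<close> of \<open>P\<close>, and the Chinese remainder theorem glues these local
  choices.  A shift along \<open>w\<close> with \<open>B(w,v) = g\<close> makes \<open>B(x,v) = \<delta> l\<close> with \<open>\<delta>\<close> dividing the modulus
  and \<open>l\<close> squarefree and prime to \<open>P\<close>; finally a shift along \<open>z\<close>, which only needs square roots
  modulo the squarefree \<open>l\<close>, makes \<open>l\<close> divide \<open>B(x,x) - b\<close>.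
\<close>

section \<open>Polynomials over the complex numbers\<close>

lemma coprime_if_no_common_root:
  fixes p q :: "complex poly"
  assumes "\<And>z. poly p z = 0 \<Longrightarrow> poly q z \<noteq> 0"
  shows "coprime p q"
proof (rule coprimeI)
  fix c assume c: "c dvd p" "c dvd q"
  show "is_unit c"
  proof (rule ccontr)
    assume not_unit: "\<not> is_unit c"
    have "c \<noteq> 0" using c assms[of 0] by auto
    then have "\<not> constant (poly c)"
      using not_unit by (simp add: constant_degree is_unit_iff_degree)
    then obtain z where "poly c z = 0" using fundamental_theorem_of_algebra by blast
    then have "poly p z = 0" "poly q z = 0" using c by (auto elim!: dvdE)
    then show False using assms by blast
  qed
qed

lemma no_common_root_if_coprime:
  fixes p q :: "'a::field poly"
  assumes "coprime p q" "poly p z = 0"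
  shows "poly q z \<noteq> 0"
proof
  assume "poly q z = 0"
  then have "[:-z,1:] dvd p" "[:-z,1:] dvd q" using assms(2) by (simp_all add: poly_eq_0_iff_dvd)
  then have "is_unit [:-z,1:]" using assms(1) coprime_common_divisor by blast
  then show False by (simp add: is_unit_iff_degree)
qed

lemma coprime_linear_powers:
  fixes \<alpha> \<beta> :: complex
  assumes "\<alpha> \<noteq> \<beta>"
  shows "coprime ([:-\<alpha>,1:]^m) ([:-\<beta>,1:]^k)"
  by (rule coprime_if_no_common_root) (use assms in \<open>auto simp: poly_power\<close>)

lemma coprime_linear_power_prod:
  fixes \<alpha> :: complex
  assumes "\<alpha> \<notin> S"
  shows "coprime ([:-\<alpha>,1:]^m) (\<Prod>\<beta>\<in>S. [:-\<beta>,1:]^(e \<beta>))"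
  using assms by (intro prod_coprime_right coprime_linear_powers) auto

lemma prod_linear_powers_dvd:
  fixes p :: "complex poly"
  assumes "finite S" "\<And>\<alpha>. \<alpha> \<in> S \<Longrightarrow> [:-\<alpha>,1:]^(e \<alpha>) dvd p"
  shows "(\<Prod>\<alpha>\<in>S. [:-\<alpha>,1:]^(e \<alpha>)) dvd p"
  using assms
proof (induction S rule: finite_induct)
  case (insert \<alpha> S)
  have "coprime ([:-\<alpha>,1:]^(e \<alpha>)) (\<Prod>\<beta>\<in>S. [:-\<beta>,1:]^(e \<beta>))"
    using insert.hyps(2) by (rule coprime_linear_power_prod)
  with insert show ?case by (simp add: divides_mult)
qed simp

lemma linear_powers_chinese_remainder:
  fixes f :: "complex \<Rightarrow> complex poly"
  assumes "finite S"
  obtains y where "\<And>\<alpha>. \<alpha> \<in> S \<Longrightarrow> [:-\<alpha>,1:]^N dvd y - f \<alpha>"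
proof -
  have "\<exists>y. \<forall>\<alpha>\<in>S. [:-\<alpha>,1:]^N dvd y - f \<alpha>"
    using assms
  proof (induction S rule: finite_induct)
    case (insert \<beta> S)
    then obtain y where y: "\<forall>\<alpha>\<in>S. [:-\<alpha>,1:]^N dvd y - f \<alpha>" by blast
    define s where "s = [:-\<beta>,1:]^N"
    define Q where "Q = (\<Prod>\<alpha>\<in>S. [:-\<alpha>,1:]^N)"
    have "coprime s Q" unfolding s_def Q_def using insert by (intro coprime_linear_power_prod)
    then obtain e k where ek: "e * s + k * Q = 1"
      by (metis bezout_coefficients_fst_snd coprime_imp_gcd_eq_1)
    define y' where "y' = f \<beta> * (k * Q) + y * (e * s)"
    have kQ: "k * Q = 1 - e * s" and es: "e * s = 1 - k * Q" using ek by (simp_all add: algebra_simps)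
    have "y' - f \<beta> = (y - f \<beta>) * e * s" unfolding y'_def kQ by (simp add: algebra_simps)
    moreover have "y' - y = (f \<beta> - y) * k * Q" unfolding y'_def es by (simp add: algebra_simps)
    ultimately have "s dvd y' - f \<beta>" and Q_dvd: "Q dvd y' - y" by simp_all
    moreover have "[:-\<alpha>,1:]^N dvd y' - f \<alpha>" if "\<alpha> \<in> S" for \<alpha>
    proof -
      have "[:-\<alpha>,1:]^N dvd Q" unfolding Q_def using insert that by (auto intro: dvd_prodI)
      then have "[:-\<alpha>,1:]^N dvd (y' - y) + (y - f \<alpha>)"
        using Q_dvd y that by (blast intro: dvd_add dvd_trans)
      then show ?thesis by simp
    qed
    ultimately show ?case unfolding s_def by blast
  qed simp
  then show thesis using that by blast
qed

lemma dvd_if_order_le: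
  fixes p q :: "complex poly"
  assumes "p \<noteq> 0" "q \<noteq> 0" "\<And>z. order z p \<le> order z q"
  shows "p dvd q"
proof -
  have "finite {z. poly p z = 0}" using assms(1) poly_roots_finite by blast
  then have "(\<Prod>z|poly p z = 0. [:-z,1:]^(order z p)) dvd q"
    by (rule prod_linear_powers_dvd) (use assms in \<open>auto simp: order_divides\<close>)
  then have "smult (lead_coeff p) (\<Prod>z|poly p z = 0. [:-z,1:]^(order z p)) dvd q"
    using assms(1) by (simp add: smult_dvd_iff)
  then show ?thesis by (subst (asm) complex_poly_decompose)
qed

lemma linear_power_not_dvd:
  fixes q :: "'a::idom poly"
  assumes "q \<noteq> 0" "degree q < N"
  shows "\<not> [:-\<alpha>,1:]^N dvd q"
proof
  assume "[:-\<alpha>,1:]^N dvd q"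
  then have "degree ([:-\<alpha>,1:]^N) \<le> degree q" using assms(1) by (rule dvd_imp_degree_le)
  then show False using assms(2) by (simp add: degree_linear_power)
qed

lemma exists_sqrt_mod_rsquarefree:
  fixes l f :: "complex poly"
  assumes "rsquarefree l"
  obtains X where "l dvd X^2 - f"
proof -
  have l0: "l \<noteq> 0" using assms rsquarefree_def by blast
  have fin: "finite {z. poly l z = 0}" using l0 poly_roots_finite by blast
  \<comment> \<open>interpolate a square root of \<open>f\<close> at the (simple) roots of \<open>l\<close>\<close>
  obtain X where X: "\<And>z. z \<in> {z. poly l z = 0} \<Longrightarrow> [:-z,1:]^1 dvd X - [:csqrt (poly f z):]"
    using linear_powers_chinese_remainder[OF fin, of 1 "\<lambda>z. [:csqrt (poly f z):]"] by blast
  have "[:-z,1:]^1 dvd X^2 - f" if "z \<in> {z. poly l z = 0}" for z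
  proof -
    have "poly (X - [:csqrt (poly f z):]) z = 0"
      using X[OF that] by (simp only: power_one_right poly_eq_0_iff_dvd)
    then have "poly (X^2 - f) z = 0" by (simp add: power2_csqrt)
    then show ?thesis by (simp only: power_one_right poly_eq_0_iff_dvd)
  qed
  then have "(\<Prod>z|poly l z = 0. [:-z,1:]^1) dvd X^2 - f" by (rule prod_linear_powers_dvd[OF fin])
  then have "smult (lead_coeff l) (\<Prod>z|poly l z = 0. [:-z,1:]) dvd X^2 - f"
    using l0 by (simp only: power_one_right smult_dvd_iff) simp
  then show thesis using that by (subst (asm) complex_poly_decompose_rsquarefree[OF assms])
qed

lemma coprime_add_smult_left:
  fixes p m :: "complex poly"
  assumes "coprime p m"
  shows "coprime (p + smult c m) m"
proof (rule coprimeI)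
  fix d assume d: "d dvd p + smult c m" "d dvd m"
  have "d dvd (p + smult c m) - smult c m" using d by (intro dvd_diff dvd_smult)
  then show "is_unit d" using assms d(2) coprime_common_divisor by simp
qed

lemma coprime_wronskian_eq_0_imp_constant:
  fixes p m :: "complex poly"
  assumes "coprime p m" "m \<noteq> 0" "pderiv p * m = p * pderiv m"
  shows "degree p = 0" "degree m = 0"
proof -
  have "m dvd pderiv m * p" using assms(3) by (metis dvd_triv_right mult.commute)
  then have "m dvd pderiv m" using assms(1) by (simp add: coprime_commute coprime_dvd_mult_left_iff)
  then show "degree m = 0" by simp
  then have "pderiv p * m = 0" using assms(3) by (simp add: pderiv_eq_0_iff)
  then show "degree p = 0" using assms(2) by (simp add: pderiv_eq_0_iff)
qed

lemma rsquarefree_in_progression: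
  fixes p m :: "complex poly"
  assumes cop: "coprime p m" and m0: "m \<noteq> 0"
  obtains c where "rsquarefree (p + smult c m)"
proof (cases "pderiv p * m = p * pderiv m")
  case True
  then obtain \<alpha> \<beta> where "p = [:\<alpha>:]" "m = [:\<beta>:]"
    using coprime_wronskian_eq_0_imp_constant[OF cop m0] by (metis degree_eq_zeroE)
  then have "p + smult ((1 - \<alpha>) / \<beta>) m = 1" using m0 by (simp add: one_pCons)
  then show thesis using that[of "(1 - \<alpha>) / \<beta>"] by (simp add: rsquarefree_roots)
next
  case False
  define W where "W = pderiv p * m - p * pderiv m"
  have "W \<noteq> 0" using False by (simp add: W_def)
  \<comment> \<open>a double root \<open>z\<close> of \<open>p + c m\<close> is a root of the Wronskian \<open>W\<close> with \<open>c = - p(z) / m(z)\<close>\<close>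
  then have "finite ((\<lambda>z. - poly p z / poly m z) ` {z. poly W z = 0})"
    by (intro finite_imageI poly_roots_finite)
  then obtain c where c: "c \<notin> (\<lambda>z. - poly p z / poly m z) ` {z. poly W z = 0}"
    using ex_new_if_finite[OF infinite_UNIV_char_0] by blast
  have "rsquarefree (p + smult c m)"
    unfolding rsquarefree_roots
  proof (intro allI notI)
    fix z assume "poly (p + smult c m) z = 0 \<and> poly (pderiv (p + smult c m)) z = 0"
    then have root: "poly p z = - (c * poly m z)"
      and droot: "poly (pderiv p) z = - (c * poly (pderiv m) z)"
      by (auto simp: pderiv_add pderiv_smult eq_neg_iff_add_eq_0)
    have "poly m z \<noteq> 0"
      using no_common_root_if_coprime[OF cop, of z] root by auto
    then have "c = - poly p z / poly m z" by (simp add: root)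
    moreover have "poly W z = 0" by (simp add: W_def root droot algebra_simps)
    ultimately show False using c by blast
  qed
  then show thesis by (rule that)
qed

lemma rsquarefree_cofactor_in_progression:
  fixes h Q g :: "complex poly"
  assumes Q0: "Q \<noteq> 0" and g0: "g \<noteq> 0"
    and Q_dvd: "\<And>\<alpha>. \<alpha> \<in> S \<Longrightarrow> [:-\<alpha>,1:]^N dvd Q"
    and roots: "\<And>z. poly (Q * g) z = 0 \<Longrightarrow> z \<in> S"
    and h: "\<And>\<alpha>. \<alpha> \<in> S \<Longrightarrow> \<not> [:-\<alpha>,1:]^N dvd h"
  obtains c \<delta> l where "h + smult c (Q * g) = \<delta> * l" "\<delta> dvd Q" "rsquarefree l"
    "\<And>z. z \<in> S \<Longrightarrow> poly l z \<noteq> 0"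
proof -
  define \<delta> where "\<delta> = gcd h (Q * g)"
  define h' where "h' = h div \<delta>"
  define m where "m = (Q * g) div \<delta>"
  have \<delta>0: "\<delta> \<noteq> 0" using Q0 g0 by (simp add: \<delta>_def)
  have h_eq: "h = \<delta> * h'" and m_eq: "Q * g = \<delta> * m" by (simp_all add: \<delta>_def h'_def m_def)
  have shallow: "\<not> [:-\<alpha>,1:]^N dvd \<delta>" if "\<alpha> \<in> S" for \<alpha>
    using h[OF that] h_eq by (metis dvd_mult2)
  have "\<delta> dvd Q"
  proof (rule dvd_if_order_le[OF \<delta>0 Q0])
    fix z show "order z \<delta> \<le> order z Q"
    proof (cases "z \<in> S")
      case True
      then show ?thesis using shallow[OF True] Q_dvd[OF True] Q0 by (auto simp: order_divides)
    next
      case False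
      then have "poly \<delta> z \<noteq> 0" using roots m_eq by fastforce
      then show ?thesis by (simp add: order_0I)
    qed
  qed
  \<comment> \<open>the cofactor \<open>m\<close> still vanishes on \<open>S\<close>, since \<open>\<delta>\<close> misses a full power \<open>(t - \<alpha>)^N\<close> of \<open>Q\<close>\<close>
  have m_roots: "poly m \<alpha> = 0" if "\<alpha> \<in> S" for \<alpha>
  proof (rule ccontr)
    assume "poly m \<alpha> \<noteq> 0"
    then have "coprime ([:-\<alpha>,1:]^N) m"
      by (intro coprime_if_no_common_root) (auto simp: poly_power)
    moreover have "[:-\<alpha>,1:]^N dvd \<delta> * m" using Q_dvd[OF that] m_eq by (metis dvd_mult2)
    ultimately show False using shallow[OF that] by (simp add: coprime_dvd_mult_left_iff)
  qed
  have "coprime h' m" unfolding h'_def m_def \<delta>_def by (rule div_gcd_coprime) (use Q0 g0 in auto)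
  moreover have "m \<noteq> 0" using m_eq Q0 g0 by auto
  ultimately obtain c where sqf: "rsquarefree (h' + smult c m)" by (rule rsquarefree_in_progression)
  have "coprime (h' + smult c m) m" by (rule coprime_add_smult_left) fact
  then have "poly (h' + smult c m) z \<noteq> 0" if "z \<in> S" for z
    using no_common_root_if_coprime m_roots[OF that] by (metis coprime_commute)
  moreover have "h + smult c (Q * g) = \<delta> * (h' + smult c m)" by (simp add: h_eq m_eq algebra_simps)
  ultimately show thesis using that \<open>\<delta> dvd Q\<close> sqf by blast
qed

section \<open>The equation X^2 = D Y^2 + f Z^2 over complex polynomials\<close>

definition conic_solvable :: "'a::comm_ring_1 \<Rightarrow> 'a \<Rightarrow> bool" where
  "conic_solvable D f \<longleftrightarrow> (\<exists>X Y Z. (X \<noteq> 0 \<or> Y \<noteq> 0 \<or> Z \<noteq> 0) \<and> X^2 = D * Y^2 + f * Z^2)"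

lemma conic_solvable_commute: "conic_solvable D f \<Longrightarrow> conic_solvable f D"
  unfolding conic_solvable_def by (metis add.commute)

lemma conic_solvable_const_left: "conic_solvable [:d:] (f :: complex poly)"
proof -
  have "[:csqrt d:]^2 = [:d:] * 1^2 + f * 0^2"
    by (simp add: power2_eq_square power2_csqrt[unfolded power2_eq_square])
  then show ?thesis unfolding conic_solvable_def by (metis one_neq_zero)
qed

lemma conic_solvable_mult_square_left:
  fixes D f s :: "'a::idom"
  assumes "conic_solvable D f" "s \<noteq> 0"
  shows "conic_solvable (s^2 * D) f"
proof -
  obtain X Y Z where nz: "X \<noteq> 0 \<or> Y \<noteq> 0 \<or> Z \<noteq> 0" and eq: "X^2 = D * Y^2 + f * Z^2"
    using assms(1) unfolding conic_solvable_def by blast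
  have "(s * X)^2 = (s^2 * D) * Y^2 + f * (s * Z)^2"
    by (simp add: power_mult_distrib eq algebra_simps)
  moreover have "s * X \<noteq> 0 \<or> Y \<noteq> 0 \<or> s * Z \<noteq> 0" using nz assms(2) by auto
  ultimately show ?thesis unfolding conic_solvable_def by blast
qed

lemma conic_solvable_descent:
  fixes D D' f X\<^sub>1 :: "'a::idom"
  assumes "conic_solvable D' f" "X\<^sub>1^2 - f = D * D'" "D \<noteq> 0" "D' \<noteq> 0"
  shows "conic_solvable D f"
proof -
  obtain X Y Z where nz: "X \<noteq> 0 \<or> Y \<noteq> 0 \<or> Z \<noteq> 0" and eq: "X^2 = D' * Y^2 + f * Z^2"
    using assms(1) unfolding conic_solvable_def by blast
  \<comment> \<open>multiplicativity of the norm form \<open>X^2 - f Z^2\<close>\<close>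
  define X' where "X' = X * X\<^sub>1 + f * Z"
  define Y' where "Y' = D' * Y"
  define Z' where "Z' = X + X\<^sub>1 * Z"
  have "X'^2 - f * Z'^2 = (X^2 - f * Z^2) * (X\<^sub>1^2 - f)"
    unfolding X'_def Z'_def by (simp add: power2_eq_square algebra_simps)
  also have "\<dots> = D * Y'^2" unfolding Y'_def assms(2) eq by (simp add: power2_eq_square algebra_simps)
  finally have "X'^2 = D * Y'^2 + f * Z'^2" by (simp add: algebra_simps)
  moreover have "X' \<noteq> 0 \<or> Y' \<noteq> 0 \<or> Z' \<noteq> 0"
  proof (rule ccontr)
    assume "\<not> ?thesis"
    then have "Y = 0" and X: "X = - (X\<^sub>1 * Z)"
      using assms(4) by (auto simp: Y'_def Z'_def eq_neg_iff_add_eq_0)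
    then have "Z^2 * (D * D') = 0" using eq by (simp add: assms(2)[symmetric] power2_eq_square algebra_simps)
    then show False using nz X \<open>Y = 0\<close> assms(3,4) by simp
  qed
  ultimately show ?thesis unfolding conic_solvable_def by blast
qed

lemma conic_solvable_reduce:
  fixes D f :: "complex poly"
  assumes IH: "\<And>D' f' :: complex poly. degree D' + degree f' < degree D + degree f \<Longrightarrow> D' \<noteq> 0 \<Longrightarrow> f' \<noteq> 0
      \<Longrightarrow> conic_solvable D' f'"
    and D0: "D \<noteq> 0" and f0: "f \<noteq> 0" and deg: "degree f \<le> degree D"
  shows "conic_solvable D f"
proof (cases "degree D = 0")
  case True
  then show ?thesis by (metis degree_eq_zeroE conic_solvable_const_left)
next
  case deg_D: False
  show ?thesis
  proof (cases "rsquarefree D")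
    case False
    then obtain \<alpha> where "order \<alpha> D \<noteq> 0" "order \<alpha> D \<noteq> 1"
      using D0 unfolding rsquarefree_def by blast
    then have "2 \<le> order \<alpha> D" by simp
    then obtain D\<^sub>1 where D: "D = [:-\<alpha>,1:]^2 * D\<^sub>1" using order_divides by (metis dvdE)
    have D\<^sub>1: "D\<^sub>1 \<noteq> 0" "degree D = 2 + degree D\<^sub>1"
      using D D0 by (auto simp: degree_mult_eq degree_power_eq)
    have "conic_solvable D\<^sub>1 f" by (rule IH) (use D\<^sub>1 f0 in simp_all)
    then show ?thesis unfolding D by (rule conic_solvable_mult_square_left) simp
  next
    case True
    obtain X\<^sub>0 where X\<^sub>0: "D dvd X\<^sub>0^2 - f" using exists_sqrt_mod_rsquarefree[OF True] by blast
    define X\<^sub>1 where "X\<^sub>1 = X\<^sub>0 mod D"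
    have "D dvd (X\<^sub>0^2 - f) - (X\<^sub>0 - X\<^sub>1) * (X\<^sub>0 + X\<^sub>1)"
      by (rule dvd_diff[OF X\<^sub>0 dvd_mult2]) (simp add: X\<^sub>1_def dvd_minus_mod)
    also have "(X\<^sub>0^2 - f) - (X\<^sub>0 - X\<^sub>1) * (X\<^sub>0 + X\<^sub>1) = X\<^sub>1^2 - f"
      by (simp add: power2_eq_square algebra_simps)
    finally obtain D' where D': "X\<^sub>1^2 - f = D * D'" by (elim dvdE)
    show ?thesis
    proof (cases "D' = 0")
      case True
      then have "X\<^sub>1^2 = D * 0^2 + f * 1^2" using D' by simp
      then show ?thesis unfolding conic_solvable_def by (metis one_neq_zero)
    next
      case False
      have "degree X\<^sub>1 < degree D" using degree_mod_less[OF D0, of X\<^sub>0] deg_D by (auto simp: X\<^sub>1_def)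
      then have "degree (X\<^sub>1^2) < 2 * degree D" using degree_power_le[of X\<^sub>1 2] by simp
      then have "degree (X\<^sub>1^2 - f) < 2 * degree D" using degree_diff_le_max[of "X\<^sub>1^2" f] deg deg_D by simp
      then have "degree D' < degree D" using D0 False by (simp add: D' degree_mult_eq)
      have "conic_solvable D' f" by (rule IH) (use \<open>degree D' < degree D\<close> False f0 in simp_all)
      then show ?thesis using D' D0 False by (rule conic_solvable_descent)
    qed
  qed
qed

theorem conic_solvable_complex_poly:
  fixes D f :: "complex poly"
  assumes "D \<noteq> 0" "f \<noteq> 0"
  shows "conic_solvable D f"
  using assms
proof (induction "degree D + degree f" arbitrary: D f rule: less_induct)
  case less
  show ?case
  proof (cases "degree f \<le> degree D")
    case True
    then show ?thesis using conic_solvable_reduce less by blast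
  next
    case False
    have "conic_solvable D' f'" if "degree D' + degree f' < degree f + degree D" "D' \<noteq> 0" "f' \<noteq> 0"
      for D' f' :: "complex poly"
      using less.hyps that by (simp add: add.commute)
    then have "conic_solvable f D" by (rule conic_solvable_reduce) (use less.prems False in auto)
    then show ?thesis by (rule conic_solvable_commute)
  qed
qed

section \<open>Diagonal quadratic forms\<close>

definition diag_form :: "nat \<Rightarrow> (nat \<Rightarrow> 'a::comm_ring_1) \<Rightarrow> (nat \<Rightarrow> 'a) \<Rightarrow> (nat \<Rightarrow> 'a) \<Rightarrow> 'a"
  where "diag_form n a x y = (\<Sum>i=1..n. a i * x i * y i)"

lemma sum_weighted_squares_eq_diag_form: "(\<Sum>i=1..n. a i * (x i)^2) = diag_form n a x x"
  unfolding diag_form_def by (simp add: power2_eq_square mult.assoc)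

lemma diag_form_commute: "diag_form n a x y = diag_form n a y x"
  unfolding diag_form_def by (simp add: ac_simps)

lemma diag_form_add_left:
  "diag_form n a (\<lambda>i. x i + y i) z = diag_form n a x z + diag_form n a y z"
  unfolding diag_form_def by (simp add: sum.distrib algebra_simps)

lemma diag_form_scale_left: "diag_form n a (\<lambda>i. c * x i) z = c * diag_form n a x z"
  unfolding diag_form_def by (simp add: sum_distrib_left algebra_simps)

lemma diag_form_add_right:
  "diag_form n a z (\<lambda>i. x i + y i) = diag_form n a z x + diag_form n a z y"
  by (simp add: diag_form_commute[of n a z] diag_form_add_left)

lemma diag_form_scale_right: "diag_form n a z (\<lambda>i. c * x i) = c * diag_form n a z x"
  by (simp add: diag_form_commute[of n a z] diag_form_scale_left)

lemma diag_form_diff_left: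
  "diag_form n a (\<lambda>i. x i - y i) z = diag_form n a x z - diag_form n a y z"
  unfolding diag_form_def by (simp add: sum_subtractf algebra_simps)

lemma diag_form_diff_right:
  "diag_form n a z (\<lambda>i. x i - y i) = diag_form n a z x - diag_form n a z y"
  by (simp add: diag_form_commute[of n a z] diag_form_diff_left)

lemmas diag_form_bilinear =
  diag_form_add_left diag_form_add_right diag_form_diff_left diag_form_diff_right
  diag_form_scale_left diag_form_scale_right

lemma dvd_diag_form_diff:
  assumes "\<And>i. m dvd x i - x' i" "\<And>i. m dvd y i - y' i"
  shows "m dvd diag_form n a x y - diag_form n a x' y'"
proof -
  have "diag_form n a x y - diag_form n a x' y'
      = (\<Sum>i=1..n. a i * (y i * (x i - x' i) + x' i * (y i - y' i)))"
    unfolding diag_form_def by (simp add: sum_subtractf[symmetric] algebra_simps)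
  also have "m dvd \<dots>" using assms by (intro dvd_sum dvd_mult dvd_add) auto
  finally show ?thesis .
qed

definition vec3 :: "'a \<Rightarrow> 'a \<Rightarrow> 'a \<Rightarrow> nat \<Rightarrow> 'a::zero" where
  "vec3 p q r i = (if i = 1 then p else if i = 2 then q else if i = 3 then r else 0)"

lemma diag_form_vec3_right:
  assumes "3 \<le> n"
  shows "diag_form n a x (vec3 p q r) = a 1 * x 1 * p + a 2 * x 2 * q + a 3 * x 3 * r"
proof -
  have "diag_form n a x (vec3 p q r) = (\<Sum>i\<in>{1,2,3}. a i * x i * vec3 p q r i)"
    unfolding diag_form_def by (rule sum.mono_neutral_right) (use assms in \<open>auto simp: vec3_def\<close>)
  then show ?thesis by (simp add: vec3_def)
qed

lemma gcd3_bezout: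
  fixes p q r :: "'a::euclidean_ring_gcd"
  obtains k\<^sub>1 k\<^sub>2 k\<^sub>3 where "k\<^sub>1 * p + k\<^sub>2 * q + k\<^sub>3 * r = gcd p (gcd q r)"
proof -
  obtain e e' where e: "e * p + e' * gcd q r = gcd p (gcd q r)"
    using bezout_coefficients_fst_snd by blast
  obtain f f' where f: "f * q + f' * r = gcd q r"
    using bezout_coefficients_fst_snd by blast
  have "e * p + (e' * f) * q + (e' * f') * r = e * p + e' * (f * q + f' * r)"
    by (simp add: algebra_simps)
  also have "\<dots> = gcd p (gcd q r)" using e f by simp
  finally have "e * p + (e' * f) * q + (e' * f') * r = gcd p (gcd q r)" .
  then show thesis by (rule that)
qed

lemma exists_primitive_divisor3:
  fixes V\<^sub>1 V\<^sub>2 V\<^sub>3 :: "'a::euclidean_ring_gcd"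
  assumes "V\<^sub>1 \<noteq> 0 \<or> V\<^sub>2 \<noteq> 0 \<or> V\<^sub>3 \<noteq> 0"
  obtains d v\<^sub>1 v\<^sub>2 v\<^sub>3 k\<^sub>1 k\<^sub>2 k\<^sub>3 where "d \<noteq> 0" "V\<^sub>1 = d * v\<^sub>1" "V\<^sub>2 = d * v\<^sub>2" "V\<^sub>3 = d * v\<^sub>3"
    "k\<^sub>1 * v\<^sub>1 + k\<^sub>2 * v\<^sub>2 + k\<^sub>3 * v\<^sub>3 = 1"
proof -
  define d where "d = gcd V\<^sub>1 (gcd V\<^sub>2 V\<^sub>3)"
  have d0: "d \<noteq> 0" using assms by (auto simp: d_def)
  obtain k\<^sub>1 k\<^sub>2 k\<^sub>3 where k: "k\<^sub>1 * V\<^sub>1 + k\<^sub>2 * V\<^sub>2 + k\<^sub>3 * V\<^sub>3 = d"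
    unfolding d_def by (rule gcd3_bezout)
  have "d dvd V\<^sub>1" "d dvd V\<^sub>2" "d dvd V\<^sub>3" unfolding d_def by (auto intro: dvd_trans)
  then obtain v\<^sub>1 v\<^sub>2 v\<^sub>3 where v: "V\<^sub>1 = d * v\<^sub>1" "V\<^sub>2 = d * v\<^sub>2" "V\<^sub>3 = d * v\<^sub>3" by (meson dvdE)
  have "d * (k\<^sub>1 * v\<^sub>1 + k\<^sub>2 * v\<^sub>2 + k\<^sub>3 * v\<^sub>3) = d * 1"
    using k unfolding v by (simp add: algebra_simps)
  then show thesis using that d0 v by simp
qed

lemma primitive_isotropic_ternary:
  fixes a\<^sub>1 a\<^sub>2 a\<^sub>3 :: "complex poly"
  assumes "a\<^sub>1 \<noteq> 0" "a\<^sub>2 \<noteq> 0" "a\<^sub>3 \<noteq> 0"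
  obtains v\<^sub>1 v\<^sub>2 v\<^sub>3 k\<^sub>1 k\<^sub>2 k\<^sub>3 where "a\<^sub>1 * v\<^sub>1^2 + a\<^sub>2 * v\<^sub>2^2 + a\<^sub>3 * v\<^sub>3^2 = 0"
    "k\<^sub>1 * v\<^sub>1 + k\<^sub>2 * v\<^sub>2 + k\<^sub>3 * v\<^sub>3 = 1"
proof -
  obtain X Y Z where nz: "X \<noteq> 0 \<or> Y \<noteq> 0 \<or> Z \<noteq> 0"
    and eq: "X^2 = (-(a\<^sub>1 * a\<^sub>2)) * Y^2 + (-(a\<^sub>1 * a\<^sub>3)) * Z^2"
    using conic_solvable_complex_poly[of "-(a\<^sub>1 * a\<^sub>2)" "-(a\<^sub>1 * a\<^sub>3)"] assms
    unfolding conic_solvable_def by auto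
  have "a\<^sub>1 * X^2 + a\<^sub>2 * (a\<^sub>1 * Y)^2 + a\<^sub>3 * (a\<^sub>1 * Z)^2
      = a\<^sub>1 * (X^2 - ((-(a\<^sub>1 * a\<^sub>2)) * Y^2 + (-(a\<^sub>1 * a\<^sub>3)) * Z^2))"
    by (simp add: power2_eq_square algebra_simps)
  then have iso: "a\<^sub>1 * X^2 + a\<^sub>2 * (a\<^sub>1 * Y)^2 + a\<^sub>3 * (a\<^sub>1 * Z)^2 = 0" by (simp add: eq)
  have "X \<noteq> 0 \<or> a\<^sub>1 * Y \<noteq> 0 \<or> a\<^sub>1 * Z \<noteq> 0" using nz assms by auto
  then obtain d v\<^sub>1 v\<^sub>2 v\<^sub>3 k\<^sub>1 k\<^sub>2 k\<^sub>3 where d: "d \<noteq> 0" and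
      v: "X = d * v\<^sub>1" "a\<^sub>1 * Y = d * v\<^sub>2" "a\<^sub>1 * Z = d * v\<^sub>3" and k: "k\<^sub>1 * v\<^sub>1 + k\<^sub>2 * v\<^sub>2 + k\<^sub>3 * v\<^sub>3 = 1"
    by (rule exists_primitive_divisor3)
  have "d^2 * (a\<^sub>1 * v\<^sub>1^2 + a\<^sub>2 * v\<^sub>2^2 + a\<^sub>3 * v\<^sub>3^2) = 0"
    using iso unfolding v by (simp add: power2_eq_square algebra_simps)
  then show thesis using that k d by simp
qed

lemma diag_form_cross_vec3:
  fixes a :: "nat \<Rightarrow> 'a::comm_ring_1"
  assumes "3 \<le> n" and iso: "a 1 * v\<^sub>1^2 + a 2 * v\<^sub>2^2 + a 3 * v\<^sub>3^2 = 0"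
    and k: "k\<^sub>1 * v\<^sub>1 + k\<^sub>2 * v\<^sub>2 + k\<^sub>3 * v\<^sub>3 = 1"
  defines "z \<equiv> vec3 (a 2 * v\<^sub>2 * k\<^sub>3 - a 3 * v\<^sub>3 * k\<^sub>2) (a 3 * v\<^sub>3 * k\<^sub>1 - a 1 * v\<^sub>1 * k\<^sub>3)
    (a 1 * v\<^sub>1 * k\<^sub>2 - a 2 * v\<^sub>2 * k\<^sub>1)"
  shows "diag_form n a z (vec3 v\<^sub>1 v\<^sub>2 v\<^sub>3) = 0" "diag_form n a z z = - (a 1 * a 2 * a 3)"
proof -
  show "diag_form n a z (vec3 v\<^sub>1 v\<^sub>2 v\<^sub>3) = 0"
    unfolding z_def diag_form_vec3_right[OF assms(1)] by (simp add: vec3_def algebra_simps)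
  \<comment> \<open>Lagrange's identity for the weighted cross product\<close>
  have "diag_form n a z z = (a 2 * a 3 * k\<^sub>1^2 + a 1 * a 3 * k\<^sub>2^2 + a 1 * a 2 * k\<^sub>3^2)
      * (a 1 * v\<^sub>1^2 + a 2 * v\<^sub>2^2 + a 3 * v\<^sub>3^2) - a 1 * a 2 * a 3 * (k\<^sub>1 * v\<^sub>1 + k\<^sub>2 * v\<^sub>2 + k\<^sub>3 * v\<^sub>3)^2"
    unfolding z_def diag_form_vec3_right[OF assms(1)] by (simp add: vec3_def power2_eq_square algebra_simps)
  also have "\<dots> = - (a 1 * a 2 * a 3)" unfolding iso k by simp
  finally show "diag_form n a z z = - (a 1 * a 2 * a 3)" .
qed

lemma ternary_isotropic_frame:
  fixes a :: "nat \<Rightarrow> complex poly"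
  assumes n: "3 \<le> n" and a: "a 1 \<noteq> 0" "a 2 \<noteq> 0" "a 3 \<noteq> 0"
  obtains v z w g where "diag_form n a v v = 0" "diag_form n a z v = 0"
    "diag_form n a z z = - (a 1 * a 2 * a 3)" "diag_form n a w v = g" "g \<noteq> 0"
    "\<And>t. poly g t = 0 \<Longrightarrow> poly (a 1 * a 2 * a 3) t = 0"
proof -
  obtain v\<^sub>1 v\<^sub>2 v\<^sub>3 k\<^sub>1 k\<^sub>2 k\<^sub>3 where iso: "a 1 * v\<^sub>1^2 + a 2 * v\<^sub>2^2 + a 3 * v\<^sub>3^2 = 0"
    and k: "k\<^sub>1 * v\<^sub>1 + k\<^sub>2 * v\<^sub>2 + k\<^sub>3 * v\<^sub>3 = 1"
    using primitive_isotropic_ternary[OF a] by blast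
  define v where "v = vec3 v\<^sub>1 v\<^sub>2 v\<^sub>3"
  define g where "g = gcd (a 1 * v\<^sub>1) (gcd (a 2 * v\<^sub>2) (a 3 * v\<^sub>3))"
  obtain c\<^sub>1 c\<^sub>2 c\<^sub>3 where c: "c\<^sub>1 * (a 1 * v\<^sub>1) + c\<^sub>2 * (a 2 * v\<^sub>2) + c\<^sub>3 * (a 3 * v\<^sub>3) = g"
    unfolding g_def by (rule gcd3_bezout)
  have "diag_form n a v v = 0"
    using iso by (simp add: v_def diag_form_vec3_right[OF n] vec3_def power2_eq_square mult.assoc)
  moreover have "diag_form n a (vec3 c\<^sub>1 c\<^sub>2 c\<^sub>3) v = g"
    using c by (simp add: v_def diag_form_vec3_right[OF n] vec3_def algebra_simps)
  moreover have "g \<noteq> 0" using k a by (auto simp: g_def)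
  moreover have "poly (a 1 * a 2 * a 3) t = 0" if "poly g t = 0" for t
  proof -
    have "g dvd a 1 * v\<^sub>1" "g dvd a 2 * v\<^sub>2" "g dvd a 3 * v\<^sub>3" by (auto simp: g_def intro: dvd_trans)
    then have "poly (a 1 * v\<^sub>1) t = 0" "poly (a 2 * v\<^sub>2) t = 0" "poly (a 3 * v\<^sub>3) t = 0"
      using that by (meson dvd_trans poly_eq_0_iff_dvd)+
    moreover have "poly k\<^sub>1 t * poly v\<^sub>1 t + poly k\<^sub>2 t * poly v\<^sub>2 t + poly k\<^sub>3 t * poly v\<^sub>3 t = 1"
      using arg_cong[OF k, of "\<lambda>p. poly p t"] by simp
    ultimately show ?thesis by auto
  qed
  ultimately show thesis using that diag_form_cross_vec3[OF n iso k] unfolding v_def by blast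
qed

lemma isotropic_partner:
  fixes a :: "nat \<Rightarrow> 'a::comm_ring_1"
  assumes vv: "diag_form n a v v = 0" and zv: "diag_form n a z v = 0"
    and zz: "diag_form n a z z = \<rho>" and wv: "diag_form n a w v = g"
  obtains u where "diag_form n a u u = 0" "diag_form n a u z = 0"
    "diag_form n a u v = 2 * \<rho>^2 * g^2"
proof -
  define w' where "w' = (\<lambda>i. \<rho> * w i - diag_form n a w z * z i)"
  have w'v: "diag_form n a w' v = \<rho> * g" and w'z: "diag_form n a w' z = 0"
    unfolding w'_def diag_form_bilinear by (simp_all add: wv zv zz mult.commute)
  define u where "u = (\<lambda>i. (2 * \<rho> * g) * w' i - diag_form n a w' w' * v i)"
  have "diag_form n a u u = 0" "diag_form n a u z = 0" "diag_form n a u v = 2 * \<rho>^2 * g^2"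
    using vv w'v w'z diag_form_commute[of n a v w'] diag_form_commute[of n a v z]
    unfolding u_def diag_form_bilinear by (simp_all add: zv power2_eq_square algebra_simps)
  then show thesis by (rule that)
qed

lemma two_mult_half_poly: "2 * [:1/2:] = (1 :: 'a::field_char_0 poly)"
  by (simp add: numeral_poly one_pCons)

lemma diag_form_eichler_invariant:
  fixes a x :: "nat \<Rightarrow> 'a::comm_ring_1"
  assumes h: "2 * h = 1" and uu: "diag_form n a u u = 0" and uw: "diag_form n a u w = 0"
  defines "E \<equiv> \<lambda>i. x i + diag_form n a x u * w i
    - (diag_form n a x w + h * diag_form n a w w * diag_form n a x u) * u i"
  shows "diag_form n a E E = diag_form n a x x"
proof -
  have "diag_form n a E E
      = diag_form n a x x + (1 - 2 * h) * (diag_form n a w w * diag_form n a x u ^ 2)"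
    using uu uw diag_form_commute[of n a w x] diag_form_commute[of n a u x]
      diag_form_commute[of n a w u]
    unfolding E_def diag_form_bilinear by (simp add: power2_eq_square algebra_simps)
  then show ?thesis by (simp add: h)
qed

lemma exists_local_solution_off_isotropic:
  fixes a :: "nat \<Rightarrow> 'a::comm_ring_1" and h :: 'a
  assumes h: "2 * h = 1"
    and uu: "diag_form n a u u = 0" and uz: "diag_form n a u z = 0" and zz: "diag_form n a z z = \<rho>"
    and zv: "diag_form n a z v = 0" and uv: "diag_form n a u v = c"
    and m: "\<not> m dvd s^2 * (c^2 * \<rho>)" and x\<^sub>0: "m dvd diag_form n a x\<^sub>0 x\<^sub>0 - b"
  obtains x where "m dvd diag_form n a x x - b" "\<not> m dvd diag_form n a x v"
proof -
  define U where "U = diag_form n a x\<^sub>0 u"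
  define Z where "Z = diag_form n a x\<^sub>0 z"
  define E where "E r = (\<lambda>i. x\<^sub>0 i + U * (r * z i)
    - (diag_form n a x\<^sub>0 (\<lambda>i. r * z i) + h * diag_form n a (\<lambda>i. r * z i) (\<lambda>i. r * z i) * U) * u i)"
    for r
  have E_value: "diag_form n a (E r) (E r) = diag_form n a x\<^sub>0 x\<^sub>0" for r
    unfolding E_def U_def using uz by (intro diag_form_eichler_invariant h uu) (simp add: diag_form_bilinear)
  define F where "F r = diag_form n a (E r) v" for r
  have F: "F r = diag_form n a x\<^sub>0 v - (r * Z + h * r^2 * \<rho> * U) * c" for r
    unfolding F_def E_def diag_form_bilinear using zv zz uv
    by (simp add: Z_def power2_eq_square algebra_simps)
  show thesis
  proof (cases "m dvd diag_form n a x\<^sub>0 v \<and> m dvd F s \<and> m dvd F (2 * s)")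
    case False
    then consider "\<not> m dvd diag_form n a x\<^sub>0 v" | "\<not> m dvd F s" | "\<not> m dvd F (2 * s)" by blast
    then show thesis
    proof cases
      case 1
      with x\<^sub>0 show thesis by (rule that)
    next
      case 2
      show thesis by (rule that[of "E s"]) (use 2 x\<^sub>0 E_value in \<open>simp_all add: F_def\<close>)
    next
      case 3
      show thesis by (rule that[of "E (2 * s)"]) (use 3 x\<^sub>0 E_value in \<open>simp_all add: F_def\<close>)
    qed
  next
    case True
    \<comment> \<open>a second difference of the quadratic \<open>F\<close> isolates its leading coefficient\<close>
    have "2 * F s - F (2 * s) - diag_form n a x\<^sub>0 v = (2 * h) * (s^2 * c * \<rho> * U)"
      unfolding F by (simp add: power2_eq_square algebra_simps)
    moreover have "m dvd 2 * F s - F (2 * s) - diag_form n a x\<^sub>0 v" using True by (simp add: dvd_diff)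
    ultimately have dvd_U: "m dvd s^2 * c * \<rho> * U" by (simp add: h)
    define x where "x = (\<lambda>i. x\<^sub>0 i + (s^2 * c * \<rho>) * u i)"
    have "diag_form n a x x - b = (diag_form n a x\<^sub>0 x\<^sub>0 - b) + 2 * (s^2 * c * \<rho> * U)"
      unfolding x_def diag_form_bilinear using uu diag_form_commute[of n a u x\<^sub>0]
      by (simp add: U_def algebra_simps)
    then have "m dvd diag_form n a x x - b" using x\<^sub>0 dvd_U by (metis dvd_add dvd_mult)
    moreover have "diag_form n a x v = diag_form n a x\<^sub>0 v + s^2 * (c^2 * \<rho>)"
      unfolding x_def diag_form_bilinear by (simp add: uv power2_eq_square algebra_simps)
    then have "\<not> m dvd diag_form n a x v" using True m by (auto simp: dvd_add_right_iff)
    ultimately show thesis by (rule that)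
  qed
qed

lemma diag_form_represents_if_isotropic_dvd:
  fixes a :: "nat \<Rightarrow> 'a::comm_ring_1" and h :: 'a
  assumes h: "2 * h = 1" and vv: "diag_form n a v v = 0"
    and "diag_form n a x v dvd diag_form n a x x - b"
  shows "\<exists>y. diag_form n a y y = b"
proof -
  obtain K where K: "diag_form n a x x - b = diag_form n a x v * K" using assms(3) by (elim dvdE)
  define y where "y = (\<lambda>i. x i - (h * K) * v i)"
  have "diag_form n a y y = diag_form n a x x - (2 * h) * (K * diag_form n a x v)"
    unfolding y_def diag_form_bilinear using vv diag_form_commute[of n a v x]
    by (simp add: algebra_simps)
  also have "\<dots> = b" unfolding h using K by (simp add: algebra_simps)
  finally show ?thesis by blast
qed

section \<open>From local to global solutions\<close>

lemma glue_local_solutions: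
  fixes a :: "nat \<Rightarrow> complex poly"
  assumes "finite S"
    and local_solvable: "\<And>\<alpha>. \<alpha> \<in> S \<Longrightarrow>
      \<exists>x. [:-\<alpha>,1:]^N dvd diag_form n a x x - b \<and> \<not> [:-\<alpha>,1:]^N dvd diag_form n a x v"
  obtains x where "\<And>\<alpha>. \<alpha> \<in> S \<Longrightarrow> [:-\<alpha>,1:]^N dvd diag_form n a x x - b"
    "\<And>\<alpha>. \<alpha> \<in> S \<Longrightarrow> \<not> [:-\<alpha>,1:]^N dvd diag_form n a x v"
proof -
  have "\<forall>\<alpha>\<in>S. \<exists>x. [:-\<alpha>,1:]^N dvd diag_form n a x x - b \<and> \<not> [:-\<alpha>,1:]^N dvd diag_form n a x v"
    using local_solvable by blast
  then have "\<exists>X. \<forall>\<alpha>\<in>S. [:-\<alpha>,1:]^N dvd diag_form n a (X \<alpha>) (X \<alpha>) - b \<and>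
      \<not> [:-\<alpha>,1:]^N dvd diag_form n a (X \<alpha>) v"
    by (rule bchoice)
  then obtain X where X: "\<And>\<alpha>. \<alpha> \<in> S \<Longrightarrow> [:-\<alpha>,1:]^N dvd diag_form n a (X \<alpha>) (X \<alpha>) - b"
    "\<And>\<alpha>. \<alpha> \<in> S \<Longrightarrow> \<not> [:-\<alpha>,1:]^N dvd diag_form n a (X \<alpha>) v"
    by blast
  have "\<forall>i. \<exists>y. \<forall>\<alpha>\<in>S. [:-\<alpha>,1:]^N dvd y - X \<alpha> i"
  proof
    fix i
    obtain y where "\<And>\<alpha>. \<alpha> \<in> S \<Longrightarrow> [:-\<alpha>,1:]^N dvd y - X \<alpha> i"
      using linear_powers_chinese_remainder[OF assms(1), of N "\<lambda>\<alpha>. X \<alpha> i"] by blast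
    then show "\<exists>y. \<forall>\<alpha>\<in>S. [:-\<alpha>,1:]^N dvd y - X \<alpha> i" by blast
  qed
  then have "\<exists>x. \<forall>i. \<forall>\<alpha>\<in>S. [:-\<alpha>,1:]^N dvd x i - X \<alpha> i" by (rule choice)
  then obtain x where x: "\<And>i \<alpha>. \<alpha> \<in> S \<Longrightarrow> [:-\<alpha>,1:]^N dvd x i - X \<alpha> i" by blast
  have "[:-\<alpha>,1:]^N dvd diag_form n a x x - b" "\<not> [:-\<alpha>,1:]^N dvd diag_form n a x v"
    if "\<alpha> \<in> S" for \<alpha>
  proof -
    have xx: "[:-\<alpha>,1:]^N dvd diag_form n a x x - diag_form n a (X \<alpha>) (X \<alpha>)"
      and xv: "[:-\<alpha>,1:]^N dvd diag_form n a x v - diag_form n a (X \<alpha>) v"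
      by (rule dvd_diag_form_diff; simp add: x that)+
    have "[:-\<alpha>,1:]^N dvd (diag_form n a x x - diag_form n a (X \<alpha>) (X \<alpha>))
        + (diag_form n a (X \<alpha>) (X \<alpha>) - b)"
      using xx X(1)[OF that] by (rule dvd_add)
    then show "[:-\<alpha>,1:]^N dvd diag_form n a x x - b" by simp
    show "\<not> [:-\<alpha>,1:]^N dvd diag_form n a x v"
    proof
      assume "[:-\<alpha>,1:]^N dvd diag_form n a x v"
      then have "[:-\<alpha>,1:]^N dvd diag_form n a x v - (diag_form n a x v - diag_form n a (X \<alpha>) v)"
        using xv by (rule dvd_diff)
      then show False using X(2)[OF that] by simp
    qed
  qed
  then show thesis by (rule that)
qed

lemma correction_mod_rsquarefree:
  fixes a z x :: "nat \<Rightarrow> complex poly"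
  assumes l: "rsquarefree l" and cop: "coprime l (Q * \<rho>)" and zz: "diag_form n a z z = \<rho>"
  obtains \<kappa> where "l dvd diag_form n a (\<lambda>i. x i + (Q * \<kappa>) * z i) (\<lambda>i. x i + (Q * \<kappa>) * z i) - b"
proof -
  define C where "C = diag_form n a x z"
  define T where "T = C^2 - \<rho> * (diag_form n a x x - b)"
  obtain R where R: "l dvd R^2 - T" using exists_sqrt_mod_rsquarefree[OF l] by blast
  obtain e f where ef: "e * (Q * \<rho>) + f * l = 1"
    using bezout_coefficients_fst_snd[of "Q * \<rho>" l] cop
    by (metis coprime_commute coprime_imp_gcd_eq_1)
  define \<kappa> where "\<kappa> = e * (R - C)"
  define y where "y = (\<lambda>i. x i + (Q * \<kappa>) * z i)"
  \<comment> \<open>completing the square: \<open>\<rho> (B(y,y) - b) = (\<rho> Q \<kappa> + C)^2 - T\<close>, and \<open>\<rho> Q \<kappa> \<equiv> R - C (mod l)\<close>\<close>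
  have "\<rho> * (diag_form n a y y - b) = (Q * \<kappa> * \<rho> + C)^2 - T"
    unfolding y_def diag_form_bilinear using zz diag_form_commute[of n a z x]
    by (simp add: C_def T_def power2_eq_square algebra_simps)
  also have "Q * \<kappa> * \<rho> + C = R - f * l * (R - C)"
  proof -
    have "Q * \<kappa> * \<rho> = e * (Q * \<rho>) * (R - C)" by (simp add: \<kappa>_def algebra_simps)
    also have "\<dots> = (1 - f * l) * (R - C)"
      using ef by (simp add: eq_diff_eq)
    finally show ?thesis by (simp add: algebra_simps)
  qed
  also have "(R - f * l * (R - C))^2 - T = (R^2 - T) + l * (f * (R - C) * (f * l * (R - C) - 2 * R))"
    by (simp add: power2_eq_square algebra_simps)
  finally have "l dvd \<rho> * (diag_form n a y y - b)" using R by simp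
  then have "l dvd diag_form n a y y - b"
    using cop by (simp add: coprime_dvd_mult_right_iff)
  then show thesis unfolding y_def by (rule that)
qed

lemma exists_solution_nondegenerate_at_roots:
  fixes a :: "nat \<Rightarrow> complex poly"
  assumes "finite S" and S: "\<And>\<alpha>. \<alpha> \<in> S \<Longrightarrow> [:-\<alpha>,1:] dvd P"
    and uu: "diag_form n a u u = 0" and uz: "diag_form n a u z = 0" and zz: "diag_form n a z z = \<rho>"
    and zv: "diag_form n a z v = 0" and uv: "diag_form n a u v = c"
    and "c^2 * \<rho> \<noteq> 0" "degree (c^2 * \<rho>) + 2 < N"
    and x\<^sub>0: "P^N dvd diag_form n a x\<^sub>0 x\<^sub>0 - b"
  obtains x where "\<And>\<alpha>. \<alpha> \<in> S \<Longrightarrow> [:-\<alpha>,1:]^N dvd diag_form n a x x - b"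
    "\<And>\<alpha>. \<alpha> \<in> S \<Longrightarrow> \<not> [:-\<alpha>,1:]^N dvd diag_form n a x v"
proof -
  have "\<exists>x. [:-\<alpha>,1:]^N dvd diag_form n a x x - b \<and> \<not> [:-\<alpha>,1:]^N dvd diag_form n a x v"
    if "\<alpha> \<in> S" for \<alpha>
  proof -
    have "[:-\<alpha>,1:]^N dvd P^N" using S[OF that] by (rule dvd_power_same)
    then have "[:-\<alpha>,1:]^N dvd diag_form n a x\<^sub>0 x\<^sub>0 - b" using x\<^sub>0 by (rule dvd_trans)
    moreover have "\<not> [:-\<alpha>,1:]^N dvd [:-\<alpha>,1:]^2 * (c^2 * \<rho>)"
      using assms(8,9) by (intro linear_power_not_dvd) (simp_all add: degree_mult_eq degree_linear_power)
    ultimately show ?thesis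
      using exists_local_solution_off_isotropic[OF two_mult_half_poly uu uz zz zv uv] by blast
  qed
  then show thesis using glue_local_solutions[OF \<open>finite S\<close>] that by blast
qed

lemma exists_shift_with_rsquarefree_pairing:
  fixes a :: "nat \<Rightarrow> complex poly"
  assumes "finite S" and wv: "diag_form n a w v = g" and "g \<noteq> 0"
    and g_roots: "\<And>t. poly g t = 0 \<Longrightarrow> t \<in> S"
    and local_xx: "\<And>\<alpha>. \<alpha> \<in> S \<Longrightarrow> [:-\<alpha>,1:]^N dvd diag_form n a x x - b"
    and local_xv: "\<And>\<alpha>. \<alpha> \<in> S \<Longrightarrow> \<not> [:-\<alpha>,1:]^N dvd diag_form n a x v"
  defines "Q \<equiv> \<Prod>\<alpha>\<in>S. [:-\<alpha>,1:]^N"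
  obtains x' \<delta> l where "diag_form n a x' v = \<delta> * l" "\<delta> dvd Q" "Q dvd diag_form n a x' x' - b"
    "rsquarefree l" "\<And>t. t \<in> S \<Longrightarrow> poly l t \<noteq> 0"
proof -
  have "Q \<noteq> 0" using \<open>finite S\<close> by (simp add: Q_def)
  have Q_roots: "t \<in> S" if "poly Q t = 0" for t
    using \<open>finite S\<close> that by (auto simp: Q_def poly_prod)
  have "Q dvd diag_form n a x x - b"
    unfolding Q_def using \<open>finite S\<close> local_xx by (rule prod_linear_powers_dvd)
  have Q_dvd: "[:-\<alpha>,1:]^N dvd Q" if "\<alpha> \<in> S" for \<alpha>
    unfolding Q_def using \<open>finite S\<close> that by (rule dvd_prodI)
  have Qg_roots: "t \<in> S" if "poly (Q * g) t = 0" for t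
    using that Q_roots g_roots by auto
  obtain c \<delta> l where cofactor: "diag_form n a x v + smult c (Q * g) = \<delta> * l"
      and "\<delta> dvd Q" "rsquarefree l" and l_roots: "\<And>t. t \<in> S \<Longrightarrow> poly l t \<noteq> 0"
    using rsquarefree_cofactor_in_progression[OF \<open>Q \<noteq> 0\<close> \<open>g \<noteq> 0\<close> Q_dvd Qg_roots local_xv] by blast
  define x' where "x' = (\<lambda>i. x i + smult c Q * w i)"
  have "diag_form n a x' v = \<delta> * l"
    using cofactor unfolding x'_def diag_form_bilinear by (simp add: wv)
  moreover have "Q dvd diag_form n a x' x' - b"
  proof -
    have "Q dvd diag_form n a x' x' - diag_form n a x x"
      by (rule dvd_diag_form_diff) (simp_all add: x'_def dvd_smult)
    then have "Q dvd (diag_form n a x' x' - diag_form n a x x) + (diag_form n a x x - b)"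
      using \<open>Q dvd diag_form n a x x - b\<close> by (rule dvd_add)
    then show ?thesis by simp
  qed
  ultimately show thesis using that \<open>\<delta> dvd Q\<close> \<open>rsquarefree l\<close> l_roots by blast
qed

lemma diag_form_represents_if_locally_represented:
  fixes a :: "nat \<Rightarrow> complex poly"
  assumes "finite S"
    and vv: "diag_form n a v v = 0" and zv: "diag_form n a z v = 0" and zz: "diag_form n a z z = \<rho>"
    and wv: "diag_form n a w v = g" and "g \<noteq> 0"
    and roots: "\<And>t. poly (g * \<rho>) t = 0 \<Longrightarrow> t \<in> S"
    and local_xx: "\<And>\<alpha>. \<alpha> \<in> S \<Longrightarrow> [:-\<alpha>,1:]^N dvd diag_form n a x x - b"
    and local_xv: "\<And>\<alpha>. \<alpha> \<in> S \<Longrightarrow> \<not> [:-\<alpha>,1:]^N dvd diag_form n a x v"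
  shows "\<exists>y. diag_form n a y y = b"
proof -
  define Q where "Q = (\<Prod>\<alpha>\<in>S. [:-\<alpha>,1:]^N)"
  have g_roots: "t \<in> S" if "poly g t = 0" for t using that roots by simp
  obtain x' \<delta> l where x'v: "diag_form n a x' v = \<delta> * l" and "\<delta> dvd Q"
      and Q_x': "Q dvd diag_form n a x' x' - b" and "rsquarefree l"
      and l_roots: "\<And>t. t \<in> S \<Longrightarrow> poly l t \<noteq> 0"
    using exists_shift_with_rsquarefree_pairing[OF \<open>finite S\<close> wv \<open>g \<noteq> 0\<close> g_roots local_xx local_xv]
    unfolding Q_def by blast
  have "coprime l (Q * \<rho>)"
  proof (rule coprime_if_no_common_root)
    fix t assume "poly l t = 0"
    then have "t \<notin> S" using l_roots by blast
    then have "poly Q t \<noteq> 0" "poly \<rho> t \<noteq> 0" using \<open>finite S\<close> roots by (auto simp: Q_def poly_prod)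
    then show "poly (Q * \<rho>) t \<noteq> 0" by simp
  qed
  obtain \<kappa> where "l dvd diag_form n a (\<lambda>i. x' i + (Q * \<kappa>) * z i) (\<lambda>i. x' i + (Q * \<kappa>) * z i) - b"
    using correction_mod_rsquarefree[OF \<open>rsquarefree l\<close> \<open>coprime l (Q * \<rho>)\<close> zz] by blast
  moreover define y where "y = (\<lambda>i. x' i + (Q * \<kappa>) * z i)"
  ultimately have "l dvd diag_form n a y y - b" by simp
  have "Q dvd diag_form n a y y - diag_form n a x' x'"
    by (rule dvd_diag_form_diff) (simp_all add: y_def)
  then have "Q dvd (diag_form n a y y - diag_form n a x' x') + (diag_form n a x' x' - b)"
    using Q_x' by (rule dvd_add)
  then have "\<delta> dvd diag_form n a y y - b" using \<open>\<delta> dvd Q\<close> by (simp add: dvd_trans)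
  moreover have "coprime Q l" using \<open>coprime l (Q * \<rho>)\<close> by (simp add: coprime_commute)
  then have "coprime \<delta> l" by (rule coprime_divisors[OF \<open>\<delta> dvd Q\<close> dvd_refl])
  ultimately have "diag_form n a y v dvd diag_form n a y y - b"
    using \<open>l dvd diag_form n a y y - b\<close>
    by (simp add: y_def diag_form_bilinear zv x'v divides_mult)
  then show ?thesis by (rule diag_form_represents_if_isotropic_dvd[OF two_mult_half_poly vv])
qed

lemma diag_form_represents_if_represented_mod_powers:
  fixes a :: "nat \<Rightarrow> complex poly"
  assumes "3 \<le> n" and a: "a 1 \<noteq> 0" "a 2 \<noteq> 0" "a 3 \<noteq> 0"
    and "P \<noteq> 0" "a 1 * a 2 * a 3 dvd P"
    and solvable_mod: "\<And>N. \<exists>x. P^N dvd diag_form n a x x - b"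
  shows "\<exists>y. diag_form n a y y = b"
proof -
  define S where "S = {t. poly P t = 0}"
  have "finite S" using \<open>P \<noteq> 0\<close> by (simp add: S_def poly_roots_finite)
  have a123_roots: "t \<in> S" if "poly (a 1 * a 2 * a 3) t = 0" for t
  proof -
    have "[:-t,1:] dvd a 1 * a 2 * a 3" using that by (simp only: poly_eq_0_iff_dvd)
    then have "[:-t,1:] dvd P" using \<open>a 1 * a 2 * a 3 dvd P\<close> by (rule dvd_trans)
    then show ?thesis by (simp add: S_def poly_eq_0_iff_dvd)
  qed
  obtain v z w g where frame: "diag_form n a v v = 0" "diag_form n a z v = 0"
      "diag_form n a z z = - (a 1 * a 2 * a 3)" "diag_form n a w v = g" "g \<noteq> 0"
      and g_roots: "\<And>t. poly g t = 0 \<Longrightarrow> poly (a 1 * a 2 * a 3) t = 0"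
    using ternary_isotropic_frame[OF assms(1) a] by blast
  define \<rho> where "\<rho> = - (a 1 * a 2 * a 3)"
  define c where "c = 2 * \<rho>^2 * g^2"
  note zz = frame(3)[folded \<rho>_def]
  obtain u where u: "diag_form n a u u = 0" "diag_form n a u z = 0" "diag_form n a u v = c"
    using isotropic_partner[OF frame(1,2) zz frame(4)] unfolding c_def by blast
  have "c^2 * \<rho> \<noteq> 0" using \<open>g \<noteq> 0\<close> a by (simp add: c_def \<rho>_def)
  define N where "N = 3 + degree (c^2 * \<rho>)"
  obtain x\<^sub>0 where "P^N dvd diag_form n a x\<^sub>0 x\<^sub>0 - b" using solvable_mod by blast
  then obtain x where "\<And>\<alpha>. \<alpha> \<in> S \<Longrightarrow> [:-\<alpha>,1:]^N dvd diag_form n a x x - b"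
      "\<And>\<alpha>. \<alpha> \<in> S \<Longrightarrow> \<not> [:-\<alpha>,1:]^N dvd diag_form n a x v"
    using exists_solution_nondegenerate_at_roots[OF \<open>finite S\<close> _ u(1,2) zz frame(2) u(3)
        \<open>c^2 * \<rho> \<noteq> 0\<close>, of P N] by (auto simp: S_def N_def poly_eq_0_iff_dvd)
  moreover have "t \<in> S" if "poly (g * \<rho>) t = 0" for t
    using that g_roots a123_roots by (auto simp: \<rho>_def)
  ultimately show ?thesis
    using diag_form_represents_if_locally_represented[OF \<open>finite S\<close> frame(1,2) zz frame(4,5)] by blast
qed

theorem mainTheorem7:
  fixes n :: nat and a :: "nat \<Rightarrow> complex poly" and b :: "complex poly"
  assumes "n \<ge> 3"
    and "\<And>i. i \<in> {1..n} \<Longrightarrow> a i \<noteq> 0"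
  shows "has_poly_solution n a b \<longleftrightarrow>
         (\<forall>m::nat. m \<ge> 1 \<longrightarrow> has_solution_mod n a b ((\<Prod>i=1..n. a i) ^ m))"
proof
  assume "has_poly_solution n a b"
  then obtain x where "(\<Sum>i=1..n. a i * (x i)^2) = b" unfolding has_poly_solution_def by blast
  then show "\<forall>m::nat. m \<ge> 1 \<longrightarrow> has_solution_mod n a b ((\<Prod>i=1..n. a i) ^ m)"
    unfolding has_solution_mod_def by (intro allI impI exI[of _ x]) simp
next
  assume solvable_mod: "\<forall>m::nat. m \<ge> 1 \<longrightarrow> has_solution_mod n a b ((\<Prod>i=1..n. a i) ^ m)"
  define P where "P = (\<Prod>i=1..n. a i)"
  have "P \<noteq> 0" and a: "a 1 \<noteq> 0" "a 2 \<noteq> 0" "a 3 \<noteq> 0" using assms by (auto simp: P_def)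
  have "(\<Prod>i\<in>{1,2,3}. a i) dvd P" unfolding P_def using assms(1) by (intro prod_dvd_prod_subset) auto
  then have "a 1 * a 2 * a 3 dvd P" by (simp add: mult.assoc)
  moreover have "\<exists>x. P^N dvd diag_form n a x x - b" for N
  proof (cases "N = 0")
    case False
    then have "has_solution_mod n a b (P^N)" using solvable_mod[rule_format, of N] by (simp add: P_def)
    then show ?thesis unfolding has_solution_mod_def sum_weighted_squares_eq_diag_form .
  qed simp
  ultimately have "\<exists>y. diag_form n a y y = b"
    using diag_form_represents_if_represented_mod_powers[OF assms(1) a \<open>P \<noteq> 0\<close>] by blast
  then show "has_poly_solution n a b"
    unfolding has_poly_solution_def sum_weighted_squares_eq_diag_form by blast
qed

end
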